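(* Let $\mathcal{C}$ be a super-modular tensor category and let $\check{\mathcal{C}}$ be any minimal modular extension of $\mathcal{C}$. Then any character $\chi(a)$ of the fusion algebra of $\mathcal{C}$ is of the form \begin{equation} \chi(a) = d_a M_{a,x} \end{equation} for some $x \in \check{\mathcal{C}}$, which is unique up to fusion with $\psi$.
   Context: A super-modular tensor category $\mathcal{C}$ is a unitary braided fusion category whose only nontrivial transparent (invisible) particle is a fermion $\psi$ with $\theta_\psi=-1$ and $\psi\times\psi=1$. A minimal modular extension $\check{\mathcal{C}}$ is a unitary modular tensor category containing $\mathcal{C}$ as a subcategory with total quantum dimension $\mathcal{D}^2_{\check{\mathcal{C}}}=2\mathcal{D}^2_{\mathcal{C}}$. A function $\chi$ on anyon labels is a character of the fusion algebra of $\mathcal{C}$ if $\chi(a)\chi(b)=\sum_{c\in\mathcal{C}}N_{ab}^c\chi(c)$ for all $a,b\in\mathcal{C}$. Here $d_a$ is the quantum dimension and $M_{ab}=S^*_{ab}S_{11}/(S_{1a}S_{1b})$ is the scalar monodromy computed in $\check{\mathcal{C}}$. *)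

theory Defs
  imports Complex_Main
begin

(* A unitary modular tensor category, described skeletally through its
   (unitary) modular data: label set L of simple objects, unit one, duality,
   fusion multiplicities N a b c = N_{ab}^c, quantum dimensions d, twists theta,
   and S-matrix. *)

definition total_dim :: "'a set \<Rightarrow> ('a \<Rightarrow> real) \<Rightarrow> real" where
  "total_dim L d = sqrt (\<Sum>a\<in>L. (d a)^2)"

definition umtc ::
  "'a set \<Rightarrow> 'a \<Rightarrow> ('a \<Rightarrow> 'a) \<Rightarrow> ('a \<Rightarrow> 'a \<Rightarrow> 'a \<Rightarrow> nat) \<Rightarrow>
   ('a \<Rightarrow> real) \<Rightarrow> ('a \<Rightarrow> complex) \<Rightarrow> ('a \<Rightarrow> 'a \<Rightarrow> complex) \<Rightarrow> bool" where
  "umtc L one dual N d \<theta> S \<longleftrightarrow>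
     finite L \<and> one \<in> L \<and> dual one = one \<and>
     (\<forall>a\<in>L. dual a \<in> L \<and> dual (dual a) = a) \<and>
     (\<forall>a b c. N a b c \<noteq> 0 \<longrightarrow> a \<in> L \<and> b \<in> L \<and> c \<in> L) \<and>
     (\<forall>a\<in>L. \<forall>b\<in>L. N one a b = (if a = b then 1 else 0)) \<and>
     (\<forall>a b c. N a b c = N b a c) \<and>
     (\<forall>a\<in>L. \<forall>b\<in>L. \<forall>c\<in>L. N a b c = N (dual a) c b) \<and>
     (\<forall>a\<in>L. \<forall>b\<in>L. N a b one = (if b = dual a then 1 else 0)) \<and>
     (\<forall>a\<in>L. \<forall>b\<in>L. \<forall>c\<in>L. \<forall>f\<in>L.
        (\<Sum>e\<in>L. N a b e * N e c f) = (\<Sum>e\<in>L. N b c e * N a e f)) \<and>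
     (\<forall>a\<in>L. d a > 0 \<and> d (dual a) = d a) \<and>
     (\<forall>a\<in>L. \<forall>b\<in>L. d a * d b = (\<Sum>c\<in>L. real (N a b c) * d c)) \<and>
     (\<forall>a\<in>L. cmod (\<theta> a) = 1 \<and> \<theta> (dual a) = \<theta> a) \<and> \<theta> one = 1 \<and>
     (\<forall>a\<in>L. \<forall>b\<in>L. S a b = (1 / complex_of_real (total_dim L d)) *
        (\<Sum>c\<in>L. of_nat (N (dual a) b c) * (\<theta> c / (\<theta> a * \<theta> b)) * complex_of_real (d c))) \<and>
     (\<forall>a\<in>L. \<forall>b\<in>L. (\<Sum>c\<in>L. S a c * cnj (S b c)) = (if a = b then 1 else 0)) \<and>
     (\<forall>a\<in>L. \<forall>b\<in>L. \<forall>x\<in>L.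
        S a x * S b x = S one x * (\<Sum>c\<in>L. of_nat (N a b c) * S c x))"

definition monodromy :: "'a \<Rightarrow> ('a \<Rightarrow> 'a \<Rightarrow> complex) \<Rightarrow> 'a \<Rightarrow> 'a \<Rightarrow> complex" where
  "monodromy one S a b = cnj (S a b) * S one one / (S one a * S one b)"

definition fusion_subcat :: "'a set \<Rightarrow> 'a \<Rightarrow> ('a \<Rightarrow> 'a) \<Rightarrow> ('a \<Rightarrow> 'a \<Rightarrow> 'a \<Rightarrow> nat) \<Rightarrow> 'a set \<Rightarrow> bool" where
  "fusion_subcat L one dual N C \<longleftrightarrow>
     C \<subseteq> L \<and> one \<in> C \<and> (\<forall>a\<in>C. dual a \<in> C) \<and>
     (\<forall>a\<in>C. \<forall>b\<in>C. \<forall>c. N a b c \<noteq> 0 \<longrightarrow> c \<in> C)"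

(* C (with the braiding inherited from the ambient UMTC) is super-modular with fermion psi:
   its only transparent simple objects are one and psi, theta_psi = -1, psi x psi = 1 *)
definition super_modular_sub ::
  "'a set \<Rightarrow> 'a \<Rightarrow> ('a \<Rightarrow> 'a) \<Rightarrow> ('a \<Rightarrow> 'a \<Rightarrow> 'a \<Rightarrow> nat) \<Rightarrow>
   ('a \<Rightarrow> complex) \<Rightarrow> ('a \<Rightarrow> 'a \<Rightarrow> complex) \<Rightarrow> 'a set \<Rightarrow> 'a \<Rightarrow> bool" where
  "super_modular_sub L one dual N \<theta> S C \<psi> \<longleftrightarrow>
     fusion_subcat L one dual N C \<and> \<psi> \<in> C \<and> \<psi> \<noteq> one \<and> \<theta> \<psi> = -1 \<and>
     (\<forall>c. N \<psi> \<psi> c = (if c = one then 1 else 0)) \<and>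
     {a\<in>C. \<forall>b\<in>C. monodromy one S a b = 1} = {one, \<psi>}"

definition minimal_extension :: "'a set \<Rightarrow> ('a \<Rightarrow> real) \<Rightarrow> 'a set \<Rightarrow> bool" where
  "minimal_extension L d C \<longleftrightarrow> (\<Sum>a\<in>L. (d a)^2) = 2 * (\<Sum>a\<in>C. (d a)^2)"

definition fusion_character ::
  "'a set \<Rightarrow> ('a \<Rightarrow> 'a \<Rightarrow> 'a \<Rightarrow> nat) \<Rightarrow> ('a \<Rightarrow> complex) \<Rightarrow> bool" where
  "fusion_character C N \<chi> \<longleftrightarrow>
     (\<exists>a\<in>C. \<chi> a \<noteq> 0) \<and>
     (\<forall>a\<in>C. \<forall>b\<in>C. \<chi> a * \<chi> b = (\<Sum>c\<in>C. of_nat (N a b c) * \<chi> c))"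

end

theory Submission
  imports Defs
begin

text \<open>
  By the Verlinde formula, every simple object \<open>x\<close> of the modular extension gives a character
  \<open>a \<mapsto> cnj (S a x) / S 1 x = d\<^sub>a M\<^sub>a\<^sub>x\<close> of the fusion algebra of \<open>C\<close>. Unitarity of \<open>S\<close> makes
  the rows \<open>S a\<close>, \<open>a \<in> C\<close>, linearly independent, so these characters separate the fusion
  algebra and therefore exhaust all of its characters.
  If \<open>x\<close> and \<open>y\<close> induce the same character, then \<open>\<Sum>\<^sub>a\<^sub>\<in>\<^sub>C S\<^sub>x\<^sub>'\<^sub>a S\<^sub>y\<^sub>a \<noteq> 0\<close>, where the column
  of \<open>x'\<close> is proportional to the conjugate column of \<open>x\<close>. Minimality forces the objects braiding
  trivially with \<open>C\<close> to be exactly \<open>1\<close> and \<open>\<psi>\<close>, which makes this sum proportional to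
  \<open>N\<^sub>x\<^sub>'\<^sub>y\<^sup>1 + N\<^sub>x\<^sub>'\<^sub>y\<^sup>\<psi>\<close>; hence \<open>y = x\<close> or \<open>y = \<psi> \<times> x\<close>. Conversely \<open>\<psi>\<close> is transparent to \<open>C\<close>
  and \<open>d\<^sub>\<psi> = 1\<close>, so fusing with \<open>\<psi>\<close> does not change the character.
\<close>

definition fusion_product ::
  "'a set \<Rightarrow> ('a \<Rightarrow> 'a \<Rightarrow> 'a \<Rightarrow> nat) \<Rightarrow> ('a \<Rightarrow> complex) \<Rightarrow> ('a \<Rightarrow> complex) \<Rightarrow> 'a \<Rightarrow> complex" where
  "fusion_product C N u v c = (\<Sum>a\<in>C. \<Sum>b\<in>C. u a * v b * of_nat (N a b c))"

lemma fusion_character_mult: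
  "fusion_character C N h \<Longrightarrow> a \<in> C \<Longrightarrow> b \<in> C \<Longrightarrow> h a * h b = (\<Sum>c\<in>C. of_nat (N a b c) * h c)"
  unfolding fusion_character_def by blast

lemma fusion_character_fusion_product:
  assumes "fusion_character C N h"
  shows "(\<Sum>c\<in>C. fusion_product C N u v c * h c) = (\<Sum>a\<in>C. u a * h a) * (\<Sum>b\<in>C. v b * h b)"
proof -
  have "(\<Sum>c\<in>C. fusion_product C N u v c * h c)
      = (\<Sum>c\<in>C. \<Sum>a\<in>C. \<Sum>b\<in>C. u a * v b * (of_nat (N a b c) * h c))"
    by (simp add: fusion_product_def sum_distrib_right mult.assoc)
  also have "\<dots> = (\<Sum>a\<in>C. \<Sum>c\<in>C. \<Sum>b\<in>C. u a * v b * (of_nat (N a b c) * h c))"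
    by (rule sum.swap)
  also have "\<dots> = (\<Sum>a\<in>C. \<Sum>b\<in>C. \<Sum>c\<in>C. u a * v b * (of_nat (N a b c) * h c))"
    by (rule sum.cong[OF refl], rule sum.swap)
  also have "\<dots> = (\<Sum>a\<in>C. \<Sum>b\<in>C. u a * v b * (h a * h b))"
    by (rule sum.cong[OF refl], rule sum.cong[OF refl])
      (simp add: fusion_character_mult[OF assms] flip: sum_distrib_left)
  also have "\<dots> = (\<Sum>a\<in>C. u a * h a) * (\<Sum>b\<in>C. v b * h b)"
    by (simp add: sum_product mult_ac)
  finally show ?thesis .
qed

lemma fusion_character_cnj:
  assumes "fusion_character C N h"
  shows "fusion_character C N (\<lambda>a. cnj (h a))"
proof -
  have "cnj (h a) * cnj (h b) = (\<Sum>c\<in>C. of_nat (N a b c) * cnj (h c))" if "a \<in> C" "b \<in> C" for a b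
    using arg_cong[OF fusion_character_mult[OF assms that], of cnj] by simp
  moreover have "\<exists>a\<in>C. cnj (h a) \<noteq> 0"
    using assms by (auto simp: fusion_character_def)
  ultimately show ?thesis
    by (simp add: fusion_character_def)
qed

text \<open>A character distinct from finitely many others is separated from all of them by a single
  element of the fusion algebra: multiply together, for each of the others, an element
  \<open>a - g(a)\<cdot>1\<close> on which that character vanishes but the given one does not.\<close>

lemma fusion_characters_separation:
  assumes "finite C" "one \<in> C" "finite X"
    and \<chi>: "fusion_character C N \<chi>" "\<chi> one = 1"
    and g: "\<forall>x\<in>X. fusion_character C N (g x) \<and> g x one = 1 \<and> (\<exists>a\<in>C. g x a \<noteq> \<chi> a)"
  shows "\<exists>u. (\<Sum>a\<in>C. u a * \<chi> a) \<noteq> 0 \<and> (\<forall>x\<in>X. (\<Sum>a\<in>C. u a * g x a) = 0)"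
  using \<open>finite X\<close> g
proof (induction X rule: finite_induct)
  case empty
  show ?case
    using \<open>finite C\<close> \<open>one \<in> C\<close> \<chi>(2) by (intro exI[of _ "\<lambda>a. of_bool (a = one)"]) simp
next
  case (insert x X)
  then obtain u where u: "(\<Sum>a\<in>C. u a * \<chi> a) \<noteq> 0" "\<forall>y\<in>X. (\<Sum>a\<in>C. u a * g y a) = 0"
    by auto
  from insert.prems obtain a where a: "a \<in> C" "g x a \<noteq> \<chi> a"
    by auto
  define v where "v b = of_bool (b = a) - g x a * of_bool (b = one)" for b
  have sum_v: "(\<Sum>b\<in>C. v b * h b) = h a - g x a * h one" for h
    using \<open>finite C\<close> \<open>one \<in> C\<close> a(1) unfolding v_def
    by (simp add: left_diff_distrib sum_subtractf mult.assoc flip: sum_distrib_left)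
  have "(\<Sum>c\<in>C. fusion_product C N u v c * \<chi> c) \<noteq> 0"
    using u(1) a(2) \<chi> by (simp add: fusion_character_fusion_product sum_v)
  moreover have "(\<Sum>c\<in>C. fusion_product C N u v c * g y c) = 0" if "y \<in> insert x X" for y
    using that u(2) insert.prems by (auto simp: fusion_character_fusion_product sum_v)
  ultimately show ?case
    by blast
qed

lemma fusion_subcat_subset: "fusion_subcat L one dual N C \<Longrightarrow> C \<subseteq> L"
  unfolding fusion_subcat_def by blast

lemma fusion_subcat_one: "fusion_subcat L one dual N C \<Longrightarrow> one \<in> C"
  unfolding fusion_subcat_def by blast

lemma fusion_subcat_dual: "fusion_subcat L one dual N C \<Longrightarrow> a \<in> C \<Longrightarrow> dual a \<in> C"
  unfolding fusion_subcat_def by blast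

lemma fusion_subcat_closed:
  "fusion_subcat L one dual N C \<Longrightarrow> a \<in> C \<Longrightarrow> b \<in> C \<Longrightarrow> N a b c \<noteq> 0 \<Longrightarrow> c \<in> C"
  unfolding fusion_subcat_def by blast

lemma sum_of_nat_delta_mult:
  fixes f :: "'a \<Rightarrow> 'b::semiring_1"
  assumes "finite A" "k \<in> A"
  shows "(\<Sum>a\<in>A. of_nat (if k = a then 1 else 0) * f a) = f k"
  using assms by (simp add: if_distrib[of of_nat] if_distrib[of "\<lambda>x. x * _"] cong: if_cong)

lemma nat_sum_squares_eq_one:
  fixes f :: "'a \<Rightarrow> nat"
  assumes "finite A" "(\<Sum>c\<in>A. (f c)^2) = 1" "e \<in> A" "f e \<noteq> 0" "c \<in> A"
  shows "f c = (if c = e then 1 else 0)"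
proof -
  have split: "(f e)^2 + (\<Sum>c\<in>A - {e}. (f c)^2) = 1"
    using assms(1-3) by (simp add: sum.remove)
  moreover have "1 \<le> (f e)^2"
    using assms(4) by (simp add: Suc_le_eq)
  ultimately have "(f e)^2 = 1" "(\<Sum>c\<in>A - {e}. (f c)^2) = 0"
    by linarith+
  then show ?thesis
    using assms(1,5) by auto
qed

locale unitary_mtc =
  fixes L :: "'a set" and one :: 'a and dual :: "'a \<Rightarrow> 'a"
    and N :: "'a \<Rightarrow> 'a \<Rightarrow> 'a \<Rightarrow> nat" and d :: "'a \<Rightarrow> real"
    and \<theta> :: "'a \<Rightarrow> complex" and S :: "'a \<Rightarrow> 'a \<Rightarrow> complex"
  assumes finite_L: "finite L" and one_in_L: "one \<in> L" and dual_one: "dual one = one"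
    and dual_axiom: "\<forall>a\<in>L. dual a \<in> L \<and> dual (dual a) = a"
    and N_support_axiom: "\<forall>a b c. N a b c \<noteq> 0 \<longrightarrow> a \<in> L \<and> b \<in> L \<and> c \<in> L"
    and N_one_left_axiom: "\<forall>a\<in>L. \<forall>b\<in>L. N one a b = (if a = b then 1 else 0)"
    and N_commute_axiom: "\<forall>a b c. N a b c = N b a c"
    and N_rotate_axiom: "\<forall>a\<in>L. \<forall>b\<in>L. \<forall>c\<in>L. N a b c = N (dual a) c b"
    and N_eq_one_axiom: "\<forall>a\<in>L. \<forall>b\<in>L. N a b one = (if b = dual a then 1 else 0)"
    and N_assoc_axiom: "\<forall>a\<in>L. \<forall>b\<in>L. \<forall>c\<in>L. \<forall>f\<in>L.
        (\<Sum>e\<in>L. N a b e * N e c f) = (\<Sum>e\<in>L. N b c e * N a e f)"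
    and d_axiom: "\<forall>a\<in>L. d a > 0 \<and> d (dual a) = d a"
    and d_mult_axiom: "\<forall>a\<in>L. \<forall>b\<in>L. d a * d b = (\<Sum>c\<in>L. real (N a b c) * d c)"
    and theta_axiom: "\<forall>a\<in>L. cmod (\<theta> a) = 1 \<and> \<theta> (dual a) = \<theta> a"
    and theta_one: "\<theta> one = 1"
    and S_formula_axiom: "\<forall>a\<in>L. \<forall>b\<in>L. S a b = (1 / complex_of_real (total_dim L d)) *
        (\<Sum>c\<in>L. of_nat (N (dual a) b c) * (\<theta> c / (\<theta> a * \<theta> b)) * complex_of_real (d c))"
    and S_unitary_axiom: "\<forall>a\<in>L. \<forall>b\<in>L. (\<Sum>c\<in>L. S a c * cnj (S b c)) = (if a = b then 1 else 0)"
    and verlinde_axiom: "\<forall>a\<in>L. \<forall>b\<in>L. \<forall>x\<in>L.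
        S a x * S b x = S one x * (\<Sum>c\<in>L. of_nat (N a b c) * S c x)"

lemma unitary_mtc_iff_umtc: "unitary_mtc L one dual N d \<theta> S \<longleftrightarrow> umtc L one dual N d \<theta> S"
  unfolding unitary_mtc_def umtc_def by (simp only: conj_assoc)

context unitary_mtc
begin

abbreviation "D \<equiv> total_dim L d"

lemmas dual_in_L = dual_axiom[rule_format, THEN conjunct1]
  and dual_dual = dual_axiom[rule_format, THEN conjunct2]
  and N_support = N_support_axiom[rule_format]
  and N_commute = N_commute_axiom[rule_format]
  and N_rotate = N_rotate_axiom[rule_format]
  and N_eq_one = N_eq_one_axiom[rule_format]
  and N_assoc = N_assoc_axiom[rule_format]
  and d_pos = d_axiom[rule_format, THEN conjunct1]
  and d_dual = d_axiom[rule_format, THEN conjunct2]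
  and d_mult = d_mult_axiom[rule_format]
  and theta_norm = theta_axiom[rule_format, THEN conjunct1]
  and theta_dual = theta_axiom[rule_format, THEN conjunct2]
  and S_formula = S_formula_axiom[rule_format]
  and S_unitary = S_unitary_axiom[rule_format]
  and verlinde = verlinde_axiom[rule_format]

lemma N_one_left: "a \<in> L \<Longrightarrow> N one a b = (if a = b then 1 else 0)"
  using N_one_left_axiom N_support[of one a b] by (cases "b \<in> L") auto

lemma theta_nonzero: "a \<in> L \<Longrightarrow> \<theta> a \<noteq> 0"
  using theta_norm by fastforce

lemma D_pos: "D > 0"
proof -
  have "(\<Sum>a\<in>L. (d a)^2) > 0"
    using d_pos[OF one_in_L] by (intro sum_pos2[OF finite_L one_in_L]) auto
  then show ?thesis
    by (simp add: total_dim_def)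
qed

lemma D_squared: "D^2 = (\<Sum>a\<in>L. (d a)^2)"
  by (simp add: total_dim_def sum_nonneg)

lemma d_one: "d one = 1"
proof -
  have "d one * d one = d one"
    using d_mult[OF one_in_L one_in_L] finite_L one_in_L
    by (simp add: N_one_left sum_of_nat_delta_mult)
  then show ?thesis
    using d_pos[OF one_in_L] by simp
qed

lemma S_one_left:
  assumes a: "a \<in> L"
  shows "S one a = complex_of_real (d a / D)"
proof -
  have "(\<Sum>c\<in>L. of_nat (N (dual one) a c) * (\<theta> c / (\<theta> one * \<theta> a)) * complex_of_real (d c))
      = \<theta> a / (\<theta> one * \<theta> a) * complex_of_real (d a)"
    using sum_of_nat_delta_mult[OF finite_L a, of "\<lambda>c. \<theta> c / (\<theta> one * \<theta> a) * complex_of_real (d c)"]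
    by (simp only: dual_one N_one_left[OF a] mult.assoc)
  then show ?thesis
    using a one_in_L theta_nonzero[OF a] by (simp add: S_formula theta_one)
qed

lemma S_one_nonzero: "a \<in> L \<Longrightarrow> S one a \<noteq> 0"
  using d_pos D_pos by (simp add: S_one_left) (metis less_irrefl)

lemma cnj_S_one: "a \<in> L \<Longrightarrow> cnj (S one a) = S one a"
  by (simp add: S_one_left)

lemma N_dual_rotate: "a \<in> L \<Longrightarrow> b \<in> L \<Longrightarrow> c \<in> L \<Longrightarrow> N (dual a) b c = N (dual b) a (dual c)"
  by (metis N_commute N_rotate dual_in_L)

lemma S_sym: assumes a: "a \<in> L" and b: "b \<in> L" shows "S a b = S b a"
proof -
  have "(\<Sum>c\<in>L. of_nat (N (dual b) a c) * (\<theta> c / (\<theta> b * \<theta> a)) * complex_of_real (d c))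
      = (\<Sum>c\<in>L. of_nat (N (dual b) a (dual c)) * (\<theta> (dual c) / (\<theta> b * \<theta> a)) * complex_of_real (d (dual c)))"
    by (rule sum.reindex_bij_witness[of _ dual dual]) (auto simp: dual_dual dual_in_L)
  also have "\<dots> = (\<Sum>c\<in>L. of_nat (N (dual a) b c) * (\<theta> c / (\<theta> a * \<theta> b)) * complex_of_real (d c))"
    by (rule sum.cong) (auto simp: N_dual_rotate[OF a b] theta_dual d_dual mult.commute)
  finally show ?thesis
    using a b by (simp add: S_formula)
qed

lemma fusion_subcat_L: "fusion_subcat L one dual N L"
  using one_in_L dual_in_L N_support by (auto simp: fusion_subcat_def)

definition S_char :: "'a \<Rightarrow> 'a \<Rightarrow> complex" where
  "S_char x a = cnj (S a x) / S one x"

lemma S_char_one: "x \<in> L \<Longrightarrow> S_char x one = 1"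
  by (simp add: S_char_def cnj_S_one S_one_nonzero)

lemma d_mult_monodromy:
  assumes a: "a \<in> L" and x: "x \<in> L"
  shows "complex_of_real (d a) * monodromy one S a x = S_char x a"
proof -
  have "complex_of_real (d a) * monodromy one S a x
      = cnj (S a x) * (complex_of_real (d a) * S one one) / (S one a * S one x)"
    by (simp add: monodromy_def mult.left_commute)
  also have "complex_of_real (d a) * S one one = S one a"
    using a by (simp add: S_one_left one_in_L d_one)
  finally show ?thesis
    by (simp only: S_char_def nonzero_mult_divide_mult_cancel_right2[OF S_one_nonzero[OF a]])
qed

lemma fusion_character_S_char:
  assumes C: "fusion_subcat L one dual N C" and x: "x \<in> L"
  shows "fusion_character C N (S_char x)"
  unfolding fusion_character_def
proof (intro conjI ballI)
  show "\<exists>a\<in>C. S_char x a \<noteq> 0"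
    using fusion_subcat_one[OF C] S_char_one[OF x] by (intro bexI[of _ one]) simp_all
next
  fix a b assume a: "a \<in> C" and b: "b \<in> C"
  have L: "a \<in> L" "b \<in> L"
    using fusion_subcat_subset[OF C] a b by blast+
  have prod: "cnj (S a x) * cnj (S b x) = S one x * (\<Sum>c\<in>L. of_nat (N a b c) * cnj (S c x))"
    using arg_cong[OF verlinde[OF L x], of cnj] by (simp add: cnj_S_one x)
  also have "(\<Sum>c\<in>L. of_nat (N a b c) * cnj (S c x)) = (\<Sum>c\<in>C. of_nat (N a b c) * cnj (S c x))"
    using fusion_subcat_subset[OF C] fusion_subcat_closed[OF C a b]
    by (intro sum.mono_neutral_right finite_L) auto
  finally have prod_C: "cnj (S a x) * cnj (S b x) = S one x * (\<Sum>c\<in>C. of_nat (N a b c) * cnj (S c x))" .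
  have "S_char x a * S_char x b = cnj (S a x) * cnj (S b x) / (S one x * S one x)"
    by (simp add: S_char_def)
  also have "\<dots> = (\<Sum>c\<in>C. of_nat (N a b c) * cnj (S c x)) / S one x"
    by (simp only: prod_C nonzero_mult_divide_mult_cancel_left[OF S_one_nonzero[OF x]] div_by_1)
  also have "\<dots> = (\<Sum>c\<in>C. of_nat (N a b c) * S_char x c)"
    by (simp add: S_char_def sum_divide_distrib)
  finally show "S_char x a * S_char x b = (\<Sum>c\<in>C. of_nat (N a b c) * S_char x c)" .
qed

lemma fusion_character_one:
  assumes C: "fusion_subcat L one dual N C" and \<chi>: "fusion_character C N \<chi>"
  shows "\<chi> one = 1"
proof -
  obtain b where b: "b \<in> C" "\<chi> b \<noteq> 0"
    using \<chi> by (auto simp: fusion_character_def)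
  have "C \<subseteq> L" "one \<in> C"
    using fusion_subcat_subset[OF C] fusion_subcat_one[OF C] by auto
  then have "\<chi> one * \<chi> b = \<chi> b"
    using fusion_character_mult[OF \<chi>, of one b] b(1) finite_L
    by (simp add: N_one_left subsetD finite_subset sum_of_nat_delta_mult)
  then show ?thesis
    using b(2) by simp
qed

lemma S_restricted_rows_independent:
  assumes "C \<subseteq> L" "b \<in> C" and orth: "\<forall>x\<in>L. (\<Sum>a\<in>C. u a * cnj (S a x)) = 0"
  shows "u b = 0"
proof -
  have "u b = (\<Sum>a\<in>C. u a * (\<Sum>x\<in>L. S b x * cnj (S a x)))"
    using assms(1,2) finite_L
    by (simp add: S_unitary subsetD finite_subset if_distrib[of "\<lambda>t. _ * t"] cong: if_cong)
  also have "\<dots> = (\<Sum>x\<in>L. S b x * (\<Sum>a\<in>C. u a * cnj (S a x)))"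
    by (simp add: sum_distrib_left mult_ac sum.swap[of _ C])
  also have "\<dots> = 0"
    using orth by simp
  finally show ?thesis .
qed

theorem fusion_character_eq_S_char:
  assumes C: "fusion_subcat L one dual N C" and \<chi>: "fusion_character C N \<chi>"
  shows "\<exists>x\<in>L. \<forall>a\<in>C. \<chi> a = S_char x a"
proof (rule ccontr)
  assume none: "\<not> ?thesis"
  have CL: "C \<subseteq> L" "one \<in> C"
    using fusion_subcat_subset[OF C] fusion_subcat_one[OF C] by auto
  then have finite_C: "finite C"
    using finite_L finite_subset by blast
  have separated: "\<forall>x\<in>L. fusion_character C N (S_char x) \<and> S_char x one = 1 \<and> (\<exists>a\<in>C. S_char x a \<noteq> \<chi> a)"
  proof
    fix x assume x: "x \<in> L"
    have "\<exists>a\<in>C. S_char x a \<noteq> \<chi> a"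
      using none x by metis
    then show "fusion_character C N (S_char x) \<and> S_char x one = 1 \<and> (\<exists>a\<in>C. S_char x a \<noteq> \<chi> a)"
      using fusion_character_S_char[OF C x] S_char_one[OF x] by blast
  qed
  obtain u where u: "(\<Sum>a\<in>C. u a * \<chi> a) \<noteq> 0" "\<forall>x\<in>L. (\<Sum>a\<in>C. u a * S_char x a) = 0"
    using fusion_characters_separation[OF finite_C CL(2) finite_L \<chi> fusion_character_one[OF C \<chi>] separated]
    by blast
  have "(\<Sum>a\<in>C. u a * cnj (S a x)) = 0" if "x \<in> L" for x
  proof -
    have "(\<Sum>a\<in>C. u a * cnj (S a x)) = S one x * (\<Sum>a\<in>C. u a * S_char x a)"
      using S_one_nonzero[OF that] by (simp add: S_char_def sum_distrib_left)
    then show ?thesis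
      using u(2) that by simp
  qed
  then have "\<forall>a\<in>C. u a = 0"
    using S_restricted_rows_independent[OF CL(1)] by blast
  then show False
    using u(1) by simp
qed

lemma exists_conjugate_column:
  assumes x: "x \<in> L"
  shows "\<exists>x'\<in>L. \<forall>a\<in>L. S a x' = S one x' / S one x * cnj (S a x)"
proof -
  obtain x' where x': "x' \<in> L" "\<forall>a\<in>L. cnj (S_char x a) = S_char x' a"
    using fusion_character_eq_S_char[OF fusion_subcat_L
        fusion_character_cnj[OF fusion_character_S_char[OF fusion_subcat_L x]]] by blast
  have "S a x' = S one x' / S one x * cnj (S a x)" if "a \<in> L" for a
  proof -
    have "cnj (S a x') = S one x' / S one x * S a x"
      using x'(2) that S_one_nonzero[OF x] S_one_nonzero[OF x'(1)]
      by (simp add: S_char_def cnj_S_one x field_simps)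
    then show ?thesis
      by (metis complex_cnj_cnj complex_cnj_divide complex_cnj_mult cnj_S_one x x'(1))
  qed
  then show ?thesis
    using x'(1) by blast
qed

end

locale super_modular_extension = unitary_mtc +
  fixes C :: "'a set" and \<psi> :: 'a
  assumes super_modular: "super_modular_sub L one dual N \<theta> S C \<psi>"
    and minimal: "minimal_extension L d C"
begin

lemma fusion_subcat_C: "fusion_subcat L one dual N C"
  using super_modular by (simp add: super_modular_sub_def)

lemmas C_subset_L = fusion_subcat_subset[OF fusion_subcat_C]
  and one_in_C = fusion_subcat_one[OF fusion_subcat_C]
  and dual_in_C = fusion_subcat_dual[OF fusion_subcat_C]
  and fusion_closed_C = fusion_subcat_closed[OF fusion_subcat_C]

lemma finite_C: "finite C"
  using C_subset_L finite_L finite_subset by blast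

lemma psi_in_C: "\<psi> \<in> C"
  using super_modular by (simp add: super_modular_sub_def)

lemma psi_in_L: "\<psi> \<in> L"
  using psi_in_C C_subset_L by blast

lemma psi_ne_one: "\<psi> \<noteq> one"
  using super_modular by (simp add: super_modular_sub_def)

lemma N_psi_psi: "N \<psi> \<psi> c = (if one = c then 1 else 0)"
  using super_modular unfolding super_modular_sub_def by (elim conjE) auto

lemma monodromy_psi: "b \<in> C \<Longrightarrow> monodromy one S \<psi> b = 1"
  using super_modular unfolding super_modular_sub_def by (elim conjE) blast

lemma dual_psi: "dual \<psi> = \<psi>"
  using N_eq_one[OF psi_in_L psi_in_L] N_psi_psi by (auto split: if_splits)

lemma d_psi: "d \<psi> = 1"
proof -
  have "(d \<psi>)^2 = 1"
    using d_mult[OF psi_in_L psi_in_L] finite_L one_in_L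
    by (simp add: N_psi_psi sum_of_nat_delta_mult d_one power2_eq_square)
  then show ?thesis
    using d_pos[OF psi_in_L] by (auto simp: power2_eq_1_iff)
qed

lemma S_psi: assumes b: "b \<in> C" shows "S b \<psi> = complex_of_real (d b / D)"
proof -
  have bL: "b \<in> L"
    using b C_subset_L by blast
  have "cnj (S \<psi> b) = complex_of_real (d b / D)"
    using monodromy_psi[OF b] D_pos d_pos[OF bL]
    by (simp add: monodromy_def S_one_left bL psi_in_L one_in_L d_one d_psi field_simps)
  then show ?thesis
    using S_sym[OF bL psi_in_L] by (metis complex_cnj_cnj complex_cnj_complex_of_real)
qed

text \<open>The labels braiding trivially with all of \<open>C\<close>, that is \<open>M\<^sub>a\<^sub>z = 1\<close> for every \<open>a \<in> C\<close>.\<close>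

definition centralizer :: "'a set" where
  "centralizer = {z\<in>L. \<forall>b\<in>C. S b z = complex_of_real (d b) * S one z}"

definition D_C_squared :: real where
  "D_C_squared = (\<Sum>a\<in>C. (d a)^2)"

lemma D_C_squared_pos: "D_C_squared > 0"
  unfolding D_C_squared_def using d_pos[OF one_in_L]
  by (intro sum_pos2[OF finite_C one_in_C]) auto

lemma D_squared_eq: "D^2 = 2 * D_C_squared"
  using minimal by (simp add: D_squared minimal_extension_def D_C_squared_def)

lemma sum_d_N_over_C:
  assumes c: "c \<in> L" and b: "b \<in> C"
  shows "(\<Sum>a\<in>C. d a * real (N a b c)) = (if c \<in> C then d b * d c else 0)"
proof (cases "c \<in> C")
  case False
  then have "N a b c = 0" if "a \<in> C" for a
    using fusion_closed_C[OF that b] by blast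
  then show ?thesis
    using False by simp
next
  case True
  have bL: "b \<in> L"
    using b C_subset_L by blast
  have "(\<Sum>a\<in>C. d a * real (N a b c)) = (\<Sum>a\<in>C. real (N c (dual b) a) * d a)"
  proof (intro sum.cong refl)
    fix a assume "a \<in> C"
    then have "N a b c = N c (dual b) a"
      using N_rotate[OF bL _ c, of a] C_subset_L N_commute by (metis subsetD)
    then show "d a * real (N a b c) = real (N c (dual b) a) * d a"
      by simp
  qed
  also have "\<dots> = (\<Sum>a\<in>L. real (N c (dual b) a) * d a)"
    using fusion_closed_C[OF True dual_in_C[OF b]] C_subset_L
    by (intro sum.mono_neutral_left finite_L) auto
  also have "\<dots> = d c * d b"
    using d_mult[OF c dual_in_L[OF bL]] d_dual[OF bL] by simp
  finally show ?thesis
    using True by simp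
qed

text \<open>\<open>\<Sum>\<^sub>a d\<^sub>a S\<^sub>a\<^sub>z\<close> is an eigenvector of the Verlinde multiplication by every \<open>b \<in> C\<close>, with
  eigenvalue \<open>d\<^sub>b\<close>; if it is nonzero, \<open>z\<close> lies in the centralizer.\<close>

lemma sum_d_S_over_C:
  assumes z: "z \<in> L"
  shows "(\<Sum>a\<in>C. complex_of_real (d a) * S a z)
       = (if z \<in> centralizer then complex_of_real D_C_squared * S one z else 0)"
proof -
  define E where "E = (\<Sum>a\<in>C. complex_of_real (d a) * S a z)"
  have eigen: "E * S b z = complex_of_real (d b) * S one z * E" if b: "b \<in> C" for b
  proof -
    have bL: "b \<in> L"
      using b C_subset_L by blast
    have "E * S b z = (\<Sum>a\<in>C. \<Sum>c\<in>L. S one z * (complex_of_real (d a * real (N a b c)) * S c z))"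
      unfolding E_def sum_distrib_right
      using C_subset_L verlinde[OF _ bL z] by (intro sum.cong) (auto simp: sum_distrib_left mult_ac)
    also have "\<dots> = (\<Sum>c\<in>L. S one z * (complex_of_real (\<Sum>a\<in>C. d a * real (N a b c)) * S c z))"
      by (simp add: sum.swap[of _ C] sum_distrib_left sum_distrib_right)
    also have "\<dots> = (\<Sum>c\<in>C. S one z * (complex_of_real (d b * d c) * S c z))"
      using finite_L C_subset_L
      by (simp add: sum_d_N_over_C b if_distrib[of "\<lambda>t. S one z * (complex_of_real t * _)"]
          sum.If_cases Int_absorb1 cong: sum.cong)
    also have "\<dots> = complex_of_real (d b) * S one z * E"
      by (simp add: E_def sum_distrib_left mult_ac)
    finally show ?thesis .
  qed
  show ?thesis
  proof (cases "z \<in> centralizer")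
    case True
    then have "E = (\<Sum>a\<in>C. complex_of_real ((d a)^2) * S one z)"
      unfolding E_def centralizer_def by (intro sum.cong) (auto simp: power2_eq_square)
    then show ?thesis
      using True by (simp add: E_def D_C_squared_def sum_distrib_right)
  next
    case False
    have "E = 0"
    proof (rule ccontr)
      assume "E \<noteq> 0"
      then have "z \<in> centralizer"
        using eigen z by (auto simp: centralizer_def mult.commute)
      then show False
        using False by blast
    qed
    then show ?thesis
      using False by (simp add: E_def)
  qed
qed

lemma sum_centralizer_d_squared: "(\<Sum>z\<in>centralizer. (d z)^2) = 2"
proof -
  have KL: "centralizer \<subseteq> L"
    by (auto simp: centralizer_def)
  have "1 = (\<Sum>a\<in>C. complex_of_real (d a) * (\<Sum>z\<in>L. S a z * cnj (S one z)))"
    using finite_C one_in_C C_subset_L one_in_L d_one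
    by (simp add: S_unitary subsetD if_distrib[of "\<lambda>t. _ * t"] cong: if_cong)
  also have "\<dots> = (\<Sum>z\<in>L. cnj (S one z) * (\<Sum>a\<in>C. complex_of_real (d a) * S a z))"
    by (simp add: sum_distrib_left sum_distrib_right mult_ac sum.swap[of _ C])
  also have "\<dots> = (\<Sum>z\<in>L. if z \<in> centralizer
      then complex_of_real (D_C_squared / D^2 * (d z)^2) else 0)"
    by (intro sum.cong) (auto simp: sum_d_S_over_C cnj_S_one S_one_left power2_eq_square)
  also have "\<dots> = complex_of_real (D_C_squared / D^2 * (\<Sum>z\<in>centralizer. (d z)^2))"
    using finite_L KL by (simp add: sum.If_cases Int_absorb1 sum_distrib_left)
  finally have "D_C_squared / D^2 * (\<Sum>z\<in>centralizer. (d z)^2) = 1"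
    by (metis of_real_eq_1_iff)
  then show ?thesis
    using D_C_squared_pos by (simp add: D_squared_eq field_simps)
qed

lemma centralizer_eq: "centralizer = {one, \<psi>}"
proof -
  have KL: "centralizer \<subseteq> L"
    by (auto simp: centralizer_def)
  have "S b one = complex_of_real (d b) * S one one" if "b \<in> C" for b
  proof -
    have b: "b \<in> L"
      using that C_subset_L by blast
    show ?thesis
      using S_sym[OF b one_in_L] by (simp add: S_one_left b one_in_L d_one)
  qed
  then have "one \<in> centralizer"
    using one_in_L by (simp add: centralizer_def)
  moreover have "\<psi> \<in> centralizer"
    using psi_in_L by (simp add: centralizer_def S_psi S_one_left d_psi)
  ultimately have sub: "{one, \<psi>} \<subseteq> centralizer"
    by blast
  have finite_K: "finite centralizer"
    using KL finite_L finite_subset by blast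
  have "(\<Sum>z\<in>centralizer. (d z)^2) = (\<Sum>z\<in>centralizer - {one, \<psi>}. (d z)^2) + (\<Sum>z\<in>{one, \<psi>}. (d z)^2)"
    by (rule sum.subset_diff[OF sub finite_K])
  then have "(\<Sum>z\<in>centralizer - {one, \<psi>}. (d z)^2) = 0"
    using sum_centralizer_d_squared psi_ne_one d_one d_psi by simp
  then have "centralizer - {one, \<psi>} = {}"
    using finite_K KL d_pos by (subst (asm) sum_nonneg_eq_0_iff) force+
  then show ?thesis
    using sub by blast
qed

lemma N_psi_commute: "a \<in> L \<Longrightarrow> b \<in> L \<Longrightarrow> N \<psi> a b = N \<psi> b a"
  using N_rotate[OF psi_in_L] dual_psi by simp

text \<open>\<open>\<psi> \<times> z\<close> is simple: associativity gives \<open>\<Sum>\<^sub>c (N\<^sub>\<psi>\<^sub>z\<^sup>c)\<^sup>2 = N\<^sub>\<psi>\<^sub>\<psi>\<^sup>1 = 1\<close>.\<close>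

lemma N_psi_unique:
  assumes z: "z \<in> L" and e: "N \<psi> z e \<noteq> 0"
  shows "N \<psi> z c = (if c = e then 1 else 0)"
proof (cases "c \<in> L")
  case True
  have "(\<Sum>c\<in>L. (N \<psi> z c)^2) = (\<Sum>c\<in>L. N \<psi> z c * N \<psi> c z)"
    using N_psi_commute[OF z] by (intro sum.cong) (simp_all add: power2_eq_square)
  also have "\<dots> = (\<Sum>c\<in>L. N \<psi> \<psi> c * N c z z)"
    using N_assoc[OF psi_in_L psi_in_L z z] by simp
  also have "\<dots> = 1"
    using sum_of_nat_delta_mult[OF finite_L one_in_L, of "\<lambda>c. N c z z"]
    by (simp add: N_psi_psi N_one_left z)
  finally have "(\<Sum>c\<in>L. (N \<psi> z c)^2) = 1" .
  moreover have "e \<in> L"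
    using N_support[OF e] by blast
  ultimately show ?thesis
    using nat_sum_squares_eq_one[of L "N \<psi> z" e c] finite_L e True by blast
next
  case False
  then show ?thesis
    using N_support[of \<psi> z c] N_support[OF e] by auto
qed

lemma d_psi_fusion: assumes x: "x \<in> L" and y: "N \<psi> x y \<noteq> 0" shows "d y = d x"
proof -
  have "d x = (\<Sum>c\<in>L. real (N \<psi> x c) * d c)"
    using d_mult[OF psi_in_L x] d_psi by simp
  also have "\<dots> = d y"
    using sum_of_nat_delta_mult[OF finite_L, of y d] N_support[OF y]
    by (simp add: N_psi_unique[OF x y] eq_commute[of _ y])
  finally show ?thesis
    by simp
qed

lemma S_psi_fusion:
  assumes x: "x \<in> L" and y: "N \<psi> x y \<noteq> 0" and a: "a \<in> C"
  shows "S a y = S a x"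
proof -
  have aL: "a \<in> L" and yL: "y \<in> L"
    using a C_subset_L N_support[OF y] by auto
  have "S \<psi> a * S x a = S one a * (\<Sum>c\<in>L. of_nat (N \<psi> x c) * S c a)"
    by (rule verlinde[OF psi_in_L x aL])
  also have "(\<Sum>c\<in>L. of_nat (N \<psi> x c) * S c a) = S y a"
    using sum_of_nat_delta_mult[OF finite_L yL, of "\<lambda>c. S c a"]
    by (simp add: N_psi_unique[OF x y] eq_commute[of _ y])
  also have "S \<psi> a = S one a"
    using S_psi[OF a] S_sym[OF aL psi_in_L] S_one_left[OF aL] by simp
  finally have "S x a = S y a"
    using S_one_nonzero[OF aL] by simp
  then show ?thesis
    using S_sym[OF aL x] S_sym[OF aL yL] by simp
qed

lemma S_char_psi_fusion:
  assumes x: "x \<in> L" and y: "N \<psi> x y \<noteq> 0" and a: "a \<in> C"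
  shows "S_char x a = S_char y a"
  using S_psi_fusion[OF x y a] d_psi_fusion[OF x y] N_support[OF y]
  by (simp add: S_char_def S_one_left)

text \<open>Verlinde turns the sum into \<open>\<Sum>\<^sub>c N\<^sub>u\<^sub>y\<^sup>c \<Sum>\<^sub>a\<^sub>\<in>\<^sub>C S\<^sub>1\<^sub>a S\<^sub>a\<^sub>c\<close>, and only the centralizer
  \<open>{1, \<psi>}\<close> of \<open>C\<close> contributes to the inner sums.\<close>

lemma sum_S_S_over_C:
  assumes u: "u \<in> L" and y: "y \<in> L"
  shows "(\<Sum>a\<in>C. S u a * S y a) = complex_of_real (D_C_squared / D^2) * of_nat (N u y one + N u y \<psi>)"
proof -
  have inner: "(\<Sum>a\<in>C. S one a * S a c) = (if c \<in> {one, \<psi>} then complex_of_real (D_C_squared / D^2) else 0)"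
    if c: "c \<in> L" for c
  proof -
    have "(\<Sum>a\<in>C. S one a * S a c) = (\<Sum>a\<in>C. complex_of_real (d a) * S a c) / complex_of_real D"
      unfolding sum_divide_distrib using C_subset_L
      by (intro sum.cong refl) (auto simp: S_one_left)
    then show ?thesis
      using c D_pos by (auto simp: sum_d_S_over_C centralizer_eq S_one_left d_one d_psi power2_eq_square)
  qed
  have "(\<Sum>a\<in>C. S u a * S y a) = (\<Sum>a\<in>C. \<Sum>c\<in>L. of_nat (N u y c) * (S one a * S a c))"
  proof (rule sum.cong[OF refl])
    fix a assume "a \<in> C"
    then have a: "a \<in> L"
      using C_subset_L by blast
    have "(\<Sum>c\<in>L. of_nat (N u y c) * (S one a * S a c)) = S one a * (\<Sum>c\<in>L. of_nat (N u y c) * S c a)"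
      unfolding sum_distrib_left by (rule sum.cong[OF refl]) (simp add: S_sym[OF _ a])
    then show "S u a * S y a = (\<Sum>c\<in>L. of_nat (N u y c) * (S one a * S a c))"
      using verlinde[OF u y a] by simp
  qed
  also have "\<dots> = (\<Sum>c\<in>L. of_nat (N u y c) * (\<Sum>a\<in>C. S one a * S a c))"
    by (subst sum.swap) (simp add: sum_distrib_left)
  also have "\<dots> = (\<Sum>c\<in>L. of_nat (N u y c) * (if c \<in> {one, \<psi>} then complex_of_real (D_C_squared / D^2) else 0))"
    by (rule sum.cong[OF refl]) (simp add: inner)
  also have "\<dots> = (\<Sum>c\<in>{one, \<psi>}. of_nat (N u y c) * complex_of_real (D_C_squared / D^2))"
    using one_in_L psi_in_L by (intro sum.mono_neutral_cong_right finite_L) auto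
  also have "\<dots> = complex_of_real (D_C_squared / D^2) * of_nat (N u y one + N u y \<psi>)"
    using psi_ne_one by (simp add: algebra_simps add_divide_distrib)
  finally show ?thesis .
qed

lemma S_proportional_if_S_char_eq:
  assumes x: "x \<in> L" and z: "z \<in> L" and eq: "S_char x a = S_char z a"
  shows "S a z = S one z / S one x * S a x"
proof -
  have "cnj (S a z) = S one z / S one x * cnj (S a x)"
    using eq S_one_nonzero[OF z] S_one_nonzero[OF x] by (simp add: S_char_def field_simps)
  then have "S a z = cnj (S one z / S one x * cnj (S a x))"
    by (metis complex_cnj_cnj)
  then show ?thesis
    by (simp add: cnj_S_one x z)
qed

text \<open>The sum \<open>\<Sum>\<^sub>a\<^sub>\<in>\<^sub>C S\<^sub>x\<^sub>'\<^sub>a S\<^sub>z\<^sub>a\<close> is a nonzero multiple of \<open>\<Sum>\<^sub>a\<^sub>\<in>\<^sub>C |S\<^sub>a\<^sub>x|\<^sup>2\<close>, while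
  \<open>sum_S_S_over_C\<close> identifies it with a multiple of \<open>N\<^sub>x\<^sub>'\<^sub>z\<^sup>1 + N\<^sub>x\<^sub>'\<^sub>z\<^sup>\<psi>\<close>.\<close>

lemma S_char_eq_imp_fusion:
  assumes x: "x \<in> L" and x': "x' \<in> L" "\<forall>a\<in>L. S a x' = S one x' / S one x * cnj (S a x)"
    and z: "z \<in> L" and eq: "\<forall>a\<in>C. S_char x a = S_char z a"
  shows "z = dual x' \<or> N \<psi> (dual x') z \<noteq> 0"
proof -
  define c where "c = S one x' / S one x * (S one z / S one x)"
  have "(\<Sum>a\<in>C. S x' a * S z a) = c * complex_of_real (\<Sum>a\<in>C. (cmod (S a x))^2)"
    unfolding of_real_sum sum_distrib_left
  proof (rule sum.cong[OF refl])
    fix a assume "a \<in> C"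
    then have a: "a \<in> L"
      using C_subset_L by blast
    have "S x' a = S one x' / S one x * cnj (S a x)"
      using x'(2) a S_sym[OF x'(1) a] by simp
    moreover have "S z a = S one z / S one x * S a x"
      using S_proportional_if_S_char_eq[OF x z] eq \<open>a \<in> C\<close> S_sym[OF z a] by simp
    ultimately have "S x' a * S z a = c * (cnj (S a x) * S a x)"
      by (simp add: c_def mult_ac)
    then show "S x' a * S z a = c * complex_of_real ((cmod (S a x))^2)"
      by (simp only: complex_norm_square) (simp add: mult_ac)
  qed
  moreover have "(\<Sum>a\<in>C. (cmod (S a x))^2) > 0"
    using S_one_nonzero[OF x] by (intro sum_pos2[OF finite_C one_in_C]) auto
  moreover have "c \<noteq> 0"
    using S_one_nonzero x x' z by (simp add: c_def)
  ultimately have "(\<Sum>a\<in>C. S x' a * S z a) \<noteq> 0"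
    by (metis mult_eq_0_iff of_real_eq_0_iff less_irrefl)
  then have "N x' z one \<noteq> 0 \<or> N x' z \<psi> \<noteq> 0"
    using sum_S_S_over_C[OF x'(1) z] by auto
  moreover have "N x' z one = (if z = dual x' then 1 else 0)"
    using N_eq_one[OF x'(1) z] .
  moreover have "N x' z \<psi> = N \<psi> (dual x') z"
    using N_rotate[OF x'(1) z psi_in_L] N_commute by metis
  ultimately show ?thesis
    by (auto split: if_splits)
qed

lemma S_char_eq_iff:
  assumes x: "x \<in> L" and y: "y \<in> L"
  shows "(\<forall>a\<in>C. S_char x a = S_char y a) \<longleftrightarrow> y = x \<or> N \<psi> x y \<noteq> 0"
proof
  assume eq: "\<forall>a\<in>C. S_char x a = S_char y a"
  obtain x' where x': "x' \<in> L" "\<forall>a\<in>L. S a x' = S one x' / S one x * cnj (S a x)"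
    using exists_conjugate_column[OF x] by blast
  define w where "w = dual x'"
  have w: "w \<in> L"
    using dual_in_L[OF x'(1)] by (simp add: w_def)
  have hx: "x = w \<or> N \<psi> w x \<noteq> 0"
    using S_char_eq_imp_fusion[OF x x' x] by (simp add: w_def)
  have hy: "y = w \<or> N \<psi> w y \<noteq> 0"
    using S_char_eq_imp_fusion[OF x x' y eq] by (simp add: w_def)
  show "y = x \<or> N \<psi> x y \<noteq> 0"
    using hx hy N_psi_commute[OF w x] N_psi_unique[OF w, of x y] by (auto split: if_splits)
next
  assume "y = x \<or> N \<psi> x y \<noteq> 0"
  then show "\<forall>a\<in>C. S_char x a = S_char y a"
    using S_char_psi_fusion[OF x] by auto
qed

end

theorem mainTheorem1:
  fixes L C :: "'a set" and one \<psi> :: 'a and dual :: "'a \<Rightarrow> 'a"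
    and N :: "'a \<Rightarrow> 'a \<Rightarrow> 'a \<Rightarrow> nat" and d :: "'a \<Rightarrow> real"
    and \<theta> :: "'a \<Rightarrow> complex" and S :: "'a \<Rightarrow> 'a \<Rightarrow> complex"
    and \<chi> :: "'a \<Rightarrow> complex"
  assumes "umtc L one dual N d \<theta> S"
    and "super_modular_sub L one dual N \<theta> S C \<psi>"
    and "minimal_extension L d C"
    and "fusion_character C N \<chi>"
  shows "\<exists>x\<in>L. (\<forall>a\<in>C. \<chi> a = complex_of_real (d a) * monodromy one S a x) \<and>
           (\<forall>y\<in>L. (\<forall>a\<in>C. \<chi> a = complex_of_real (d a) * monodromy one S a y)
                    \<longleftrightarrow> (y = x \<or> N \<psi> x y \<noteq> 0))"
proof -
  interpret super_modular_extension L one dual N d \<theta> S C \<psi>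
    using assms(1-3)
    by (simp add: super_modular_extension_def super_modular_extension_axioms_def unitary_mtc_iff_umtc)
  have monodromy_eq: "complex_of_real (d a) * monodromy one S a z = S_char z a" if "a \<in> C" "z \<in> L" for a z
    using d_mult_monodromy that C_subset_L by blast
  obtain x where x: "x \<in> L" "\<forall>a\<in>C. \<chi> a = S_char x a"
    using fusion_character_eq_S_char[OF fusion_subcat_C assms(4)] by blast
  have "(\<forall>a\<in>C. \<chi> a = complex_of_real (d a) * monodromy one S a y) \<longleftrightarrow> (y = x \<or> N \<psi> x y \<noteq> 0)"
    if "y \<in> L" for y
    using x(2) monodromy_eq[OF _ that] S_char_eq_iff[OF x(1) that] by simp
  moreover have "\<forall>a\<in>C. \<chi> a = complex_of_real (d a) * monodromy one S a x"
    using x monodromy_eq by simp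
  ultimately show ?thesis
    using x(1) by blast
qed

end
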